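(* Let $\Lambda\subseteq\Delta$ be a non-empty closed convex set. Assume there is $L\ge0$ such that for every $g\in\mathcal G_1$ the map $\lambda\mapsto D_{KL}(\hat{\mathsf p}_\lambda\,\|\,\pi_g)$ is finite-valued and $L$-Lipschitz on $\Delta$ with respect to $\|\cdot\|_1$. Let $V^*_\Delta=\inf_{g\in\mathcal G_1}\max_{\lambda\in\Delta}D_{KL}(\hat{\mathsf p}_\lambda\|\pi_g)$ and $V^*_\Lambda=\inf_{g\in\mathcal G_1}\max_{\lambda\in\Lambda}D_{KL}(\hat{\mathsf p}_\lambda\|\pi_g)$. Then $$0\le V^*_\Delta-V^*_\Lambda\le L\cdot d_H(\Lambda,\Delta),\qquad d_H(\Lambda,\Delta)=\max_{\lambda\in\Delta}\min_{\lambda'\in\Lambda}\|\lambda-\lambda'\|_1 .$$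
   Context: Fix an integer $p\ge 1$, $[1,p]=\{1,\dots,p\}$, $\Delta=\{\lambda\in\mathbb R^p:\lambda_k\ge 0,\ \sum_k\lambda_k=1\}$. Let $\hat{\mathsf p}_1,\dots,\hat{\mathsf p}_p$ be probability distributions with finite supports, $\mathcal X_0=\bigcup_k\mathrm{supp}(\hat{\mathsf p}_k)$, and $\hat\pi_1,\dots,\hat\pi_p$ probability distributions on $\mathcal X_0$. A gate is $g:\mathcal X_0\times[1,p]\to[0,1]$ with $\sum_kg(x,k)=1$ for each $x$; $\pi_g(x)=\sum_kg(x,k)\hat\pi_k(x)$, $Z_g=\sum_{x\in\mathcal X_0}\pi_g(x)$, $\mathcal G_1=\{g:Z_g=1\}$. For $\lambda\in\Delta$, $\hat{\mathsf p}_\lambda=\sum_k\lambda_k\hat{\mathsf p}_k$. $D_{KL}(P\|Q)=\sum_xP(x)\log\frac{P(x)}{Q(x)}\in[0,\infty]$ with conventions $0\log\frac0q=0$, $a\log\frac a0=+\infty$ for $a>0$. *)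

theory Defs
  imports "HOL-Analysis.Analysis" "HOL-Probability.Probability_Mass_Function"
begin

text \<open>Index set [1,p] is modelled by a finite type 'n (p = CARD('n) \<ge> 1);
  weight vectors lambda are elements of real^'n.\<close>

definition prob_simplex :: "(real^'n) set" where
  "prob_simplex = {l. (\<forall>k. 0 \<le> l $ k) \<and> (\<Sum>k\<in>UNIV. l $ k) = 1}"

definition l1dist :: "real^'n \<Rightarrow> real^'n \<Rightarrow> real" where
  "l1dist l l' = (\<Sum>k\<in>UNIV. \<bar>l $ k - l' $ k\<bar>)"

text \<open>Kullback-Leibler divergence of P from Q, summed over a finite set X
  (containing the support of P); conventions 0 log(0/q) = 0, a log(a/0) = +infinity.\<close>

definition KL :: "'a set \<Rightarrow> ('a \<Rightarrow> real) \<Rightarrow> ('a \<Rightarrow> real) \<Rightarrow> ereal" where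
  "KL X P Q = (\<Sum>x\<in>X. if P x = 0 then 0
                        else if Q x = 0 then \<infinity>
                        else ereal (P x * ln (P x / Q x)))"

definition X0 :: "('n \<Rightarrow> 'a pmf) \<Rightarrow> 'a set" where
  "X0 P = (\<Union>k. set_pmf (P k))"

definition mixture :: "('n \<Rightarrow> 'a pmf) \<Rightarrow> real^'n \<Rightarrow> 'a \<Rightarrow> real" where
  "mixture P l x = (\<Sum>k\<in>UNIV. l $ k * pmf (P k) x)"

definition is_gate :: "'a set \<Rightarrow> ('a \<Rightarrow> 'n \<Rightarrow> real) \<Rightarrow> bool" where
  "is_gate X g \<longleftrightarrow> (\<forall>x\<in>X. (\<forall>k. 0 \<le> g x k \<and> g x k \<le> 1) \<and> (\<Sum>k\<in>UNIV. g x k) = 1)"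

definition pi_gate :: "('n \<Rightarrow> 'a pmf) \<Rightarrow> ('a \<Rightarrow> 'n \<Rightarrow> real) \<Rightarrow> 'a \<Rightarrow> real" where
  "pi_gate Pih g x = (\<Sum>k\<in>UNIV. g x k * pmf (Pih k) x)"

definition Zg :: "'a set \<Rightarrow> ('n \<Rightarrow> 'a pmf) \<Rightarrow> ('a \<Rightarrow> 'n \<Rightarrow> real) \<Rightarrow> real" where
  "Zg X Pih g = (\<Sum>x\<in>X. pi_gate Pih g x)"

definition G1 :: "'a set \<Rightarrow> ('n \<Rightarrow> 'a pmf) \<Rightarrow> ('a \<Rightarrow> 'n \<Rightarrow> real) set" where
  "G1 X Pih = {g. is_gate X g \<and> Zg X Pih g = 1}"

definition minimax_value ::
  "('n \<Rightarrow> 'a pmf) \<Rightarrow> ('n \<Rightarrow> 'a pmf) \<Rightarrow> (real^'n) set \<Rightarrow> ereal" where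
  "minimax_value P Pih S =
     (INF g\<in>G1 (X0 P) Pih. SUP l\<in>S. KL (X0 P) (mixture P l) (pi_gate Pih g))"

definition hausdorff_l1 :: "(real^'n) set \<Rightarrow> (real^'n) set \<Rightarrow> real" where
  "hausdorff_l1 A B = (SUP l\<in>B. INF l'\<in>A. l1dist l l')"

end

theory Submission
  imports Defs
begin

text \<open>For a fixed gate the loss \<lambda> \<mapsto> D_KL(p_\<lambda> || \<pi>_g) is L-Lipschitz, so its maximum over
  \<Delta> exceeds its maximum over \<Lambda> by at most L times the distance from the worst \<lambda> \<in> \<Delta> to \<Lambda>,
  i.e. by at most L d_H(\<Lambda>, \<Delta>); the reverse inequality is monotonicity of the maximum under
  \<Lambda> \<subseteq> \<Delta>. Both bounds are uniform in the gate and so survive the infimum over all normalised gates.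
  Subtracting the two minimax values is meaningful because both are finite: every loss is
  bounded below by -1, and for the uniform gate it is bounded above on \<Delta>.\<close>

lemma KL_ge_minus_one:
  assumes "finite X" "\<And>x. x \<in> X \<Longrightarrow> 0 \<le> P x" "\<And>x. x \<in> X \<Longrightarrow> 0 \<le> Q x"
    and "(\<Sum>x\<in>X. Q x) = 1"
  shows "-1 \<le> KL X P Q"
proof -
  have "ereal (- Q x) \<le> (if P x = 0 then 0 else if Q x = 0 then \<infinity> else ereal (P x * ln (P x / Q x)))"
    if x: "x \<in> X" for x
  proof (cases "P x = 0 \<or> Q x = 0")
    case True
    then show ?thesis using assms(3)[OF x] by auto
  next
    case False
    then have p: "P x > 0" and q: "Q x > 0" using assms(2,3)[OF x] by auto
    have "P x * ln (Q x / P x) \<le> P x * (Q x / P x - 1)"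
      using p q by (intro mult_left_mono ln_le_minus_one) auto
    also have "\<dots> = Q x - P x" using p by (simp add: field_simps)
    finally have "- Q x \<le> P x * ln (P x / Q x)"
      using p q by (simp add: ln_div algebra_simps)
    then show ?thesis using False by simp
  qed
  then have "(\<Sum>x\<in>X. ereal (- Q x)) \<le> KL X P Q"
    unfolding KL_def by (rule sum_mono)
  moreover have "(\<Sum>x\<in>X. ereal (- Q x)) = ereal (-1)"
    by (simp add: sum_ereal sum_negf assms(4))
  ultimately show ?thesis by (simp add: one_ereal_def)
qed

lemma l1dist_nonneg: "0 \<le> l1dist l l'"
  unfolding l1dist_def by (simp add: sum_nonneg)

lemma l1dist_le_2:
  assumes "l \<in> prob_simplex" "l' \<in> prob_simplex"
  shows "l1dist l l' \<le> 2"
proof -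
  have "l1dist l l' \<le> (\<Sum>k\<in>UNIV. l $ k + l' $ k)"
    unfolding l1dist_def using assms
    by (intro sum_mono) (auto simp: prob_simplex_def abs_le_iff)
  also have "\<dots> = 2" using assms by (simp add: sum.distrib prob_simplex_def)
  finally show ?thesis .
qed

lemma INF_l1dist_le_hausdorff_l1:
  assumes "l \<in> prob_simplex" "\<Lambda> \<subseteq> prob_simplex" "\<Lambda> \<noteq> {}"
  shows "(INF l'\<in>\<Lambda>. l1dist l l') \<le> hausdorff_l1 \<Lambda> prob_simplex"
  unfolding hausdorff_l1_def
proof (rule cSUP_upper[OF assms(1)], rule bdd_aboveI)
  obtain l0 where "l0 \<in> \<Lambda>" using assms(3) by auto
  fix d assume "d \<in> (\<lambda>l. INF l'\<in>\<Lambda>. l1dist l l') ` prob_simplex"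
  then obtain l where "l \<in> prob_simplex" "d = (INF l'\<in>\<Lambda>. l1dist l l')" by auto
  moreover have "bdd_below (l1dist l ` \<Lambda>)" by (rule bdd_belowI[of _ 0]) (auto simp: l1dist_nonneg)
  ultimately have "d \<le> l1dist l l0" using \<open>l0 \<in> \<Lambda>\<close> by (auto intro: cINF_lower)
  also have "\<dots> \<le> 2" using \<open>l \<in> prob_simplex\<close> \<open>l0 \<in> \<Lambda>\<close> assms(2) by (auto intro: l1dist_le_2)
  finally show "d \<le> 2" .
qed

lemma mixture_nonneg: "l \<in> prob_simplex \<Longrightarrow> 0 \<le> mixture P l x"
  unfolding mixture_def prob_simplex_def by (auto intro!: sum_nonneg)

lemma pi_gate_nonneg: "is_gate X g \<Longrightarrow> x \<in> X \<Longrightarrow> 0 \<le> pi_gate Pih g x"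
  unfolding pi_gate_def is_gate_def by (auto intro!: sum_nonneg)

lemma KL_mixture_pi_gate_ge_minus_one:
  assumes "finite X" "g \<in> G1 X Pih" "l \<in> prob_simplex"
  shows "-1 \<le> KL X (mixture P l) (pi_gate Pih g)"
  using assms by (intro KL_ge_minus_one mixture_nonneg pi_gate_nonneg)
    (auto simp: G1_def Zg_def)

lemma uniform_gate_in_G1:
  fixes Pih :: "'n::finite \<Rightarrow> 'a pmf"
  assumes "finite X" "\<And>k. set_pmf (Pih k) \<subseteq> X"
  shows "(\<lambda>x k. 1 / real CARD('n)) \<in> G1 X Pih"
proof -
  have "Zg X Pih (\<lambda>x k. 1 / real CARD('n)) = (\<Sum>k\<in>UNIV. (\<Sum>x\<in>X. pmf (Pih k) x) / real CARD('n))"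
    unfolding Zg_def pi_gate_def by (subst sum.swap) (simp add: sum_divide_distrib)
  also have "\<dots> = 1" using sum_pmf_eq_1[OF assms] by simp
  finally show ?thesis unfolding G1_def is_gate_def by auto
qed

lemma minimax_value_mono: "S \<subseteq> T \<Longrightarrow> minimax_value P Pih S \<le> minimax_value P Pih T"
  unfolding minimax_value_def by (intro INF_mono' SUP_subset_mono) auto

lemma minimax_value_ge_minus_one:
  assumes "finite (X0 P)" "S \<subseteq> prob_simplex" "S \<noteq> {}"
  shows "-1 \<le> minimax_value P Pih S"
proof -
  obtain l0 where "l0 \<in> S" using assms(3) by auto
  then show ?thesis unfolding minimax_value_def using assms(1,2)
    by (intro INF_greatest SUP_upper2[OF \<open>l0 \<in> S\<close>] KL_mixture_pi_gate_ge_minus_one) auto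
qed

lemma SUP_le_SUP_net_plus_Lipschitz:
  fixes f :: "'b \<Rightarrow> real" and d :: "'b \<Rightarrow> 'b \<Rightarrow> real"
  assumes "N \<noteq> {}" "0 \<le> L"
    and lip: "\<And>x y. x \<in> S \<Longrightarrow> y \<in> N \<Longrightarrow> f x \<le> f y + L * d x y"
    and net: "\<And>x. x \<in> S \<Longrightarrow> (INF y\<in>N. d x y) \<le> h"
  shows "(SUP x\<in>S. ereal (f x)) \<le> (SUP y\<in>N. ereal (f y)) + ereal (L * h)"
proof -
  obtain y0 where y0: "y0 \<in> N" using \<open>N \<noteq> {}\<close> by auto
  have "ereal (f y0) \<le> (SUP y\<in>N. ereal (f y))" using y0 by (rule SUP_upper)
  then consider m where "(SUP y\<in>N. ereal (f y)) = ereal m" | "(SUP y\<in>N. ereal (f y)) = \<infinity>"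
    by (cases "SUP y\<in>N. ereal (f y)") auto
  then show ?thesis
  proof cases
    case (1 m)
    have "f x \<le> m + L * h" if x: "x \<in> S" for x
    proof -
      have gap: "f x - m \<le> L * d x y" if y: "y \<in> N" for y
      proof -
        have "ereal (f y) \<le> ereal m" using SUP_upper[OF y, of "\<lambda>y. ereal (f y)"] 1 by simp
        then show ?thesis using lip[OF x y] by simp
      qed
      have "f x - m \<le> L * (INF y\<in>N. d x y)"
      proof (cases "L = 0")
        case True
        then show ?thesis using gap[OF y0] by simp
      next
        case False
        then have "L > 0" using \<open>0 \<le> L\<close> by simp
        have "(f x - m) / L \<le> (INF y\<in>N. d x y)"
          using \<open>N \<noteq> {}\<close> gap \<open>L > 0\<close> by (intro cINF_greatest) (auto simp: divide_le_eq mult.commute)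
        then show ?thesis using \<open>L > 0\<close> by (simp add: divide_le_eq mult.commute)
      qed
      also have "\<dots> \<le> L * h" using net[OF x] \<open>0 \<le> L\<close> by (rule mult_left_mono)
      finally show ?thesis by simp
    qed
    then show ?thesis unfolding 1 by (intro SUP_least) simp
  qed simp
qed

lemma INF_le_INF_plus_ereal:
  fixes M N :: "'g \<Rightarrow> ereal"
  assumes "\<And>g. g \<in> G \<Longrightarrow> M g \<le> N g + ereal c"
  shows "(INF g\<in>G. M g) \<le> (INF g\<in>G. N g) + ereal c"
proof -
  have "(INF g\<in>G. M g) - ereal c \<le> (INF g\<in>G. N g)"
  proof (rule INF_greatest)
    fix g assume "g \<in> G"
    then have "(INF g\<in>G. M g) \<le> N g + ereal c" using assms by (blast intro: INF_lower2)
    then show "(INF g\<in>G. M g) - ereal c \<le> N g" by (simp add: ereal_minus_le_iff)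
  qed
  then show ?thesis by (simp add: ereal_minus_le_iff)
qed

lemma SUP_simplex_le_SUP_net_plus_Lipschitz:
  fixes K :: "real^'n \<Rightarrow> ereal"
  assumes finite: "\<And>l. l \<in> prob_simplex \<Longrightarrow> \<bar>K l\<bar> \<noteq> \<infinity>"
    and lip: "\<And>l l'. l \<in> prob_simplex \<Longrightarrow> l' \<in> prob_simplex \<Longrightarrow>
        \<bar>real_of_ereal (K l) - real_of_ereal (K l')\<bar> \<le> L * l1dist l l'"
    and "0 \<le> L" "S \<subseteq> prob_simplex" "S \<noteq> {}"
    and net: "\<And>l. l \<in> prob_simplex \<Longrightarrow> (INF l'\<in>S. l1dist l l') \<le> c"
  shows "(SUP l\<in>prob_simplex. K l) \<le> (SUP l\<in>S. K l) + ereal (L * c)"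
proof -
  have "(SUP l\<in>T. K l) = (SUP l\<in>T. ereal (real_of_ereal (K l)))" if "T \<subseteq> prob_simplex" for T
    using finite that by (intro SUP_cong) (auto simp: ereal_real subset_iff)
  moreover have "real_of_ereal (K l) \<le> real_of_ereal (K l') + L * l1dist l l'"
    if "l \<in> prob_simplex" "l' \<in> S" for l l'
    using lip[of l l'] that \<open>S \<subseteq> prob_simplex\<close> by (auto simp: abs_le_iff)
  then have "(SUP l\<in>prob_simplex. ereal (real_of_ereal (K l)))
      \<le> (SUP l\<in>S. ereal (real_of_ereal (K l))) + ereal (L * c)"
    using assms(3,5) net by (intro SUP_le_SUP_net_plus_Lipschitz[where d = l1dist])
  ultimately show ?thesis using \<open>S \<subseteq> prob_simplex\<close> by simp
qed

theorem mainTheorem7: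
  fixes P Pih :: "'n::finite \<Rightarrow> 'a pmf"
    and \<Lambda> :: "(real^'n) set"
    and L :: real
  assumes fin: "\<And>k. finite (set_pmf (P k))"
    and Pi_on: "\<And>k. set_pmf (Pih k) \<subseteq> X0 P"
    and sub: "\<Lambda> \<subseteq> prob_simplex" and ne: "\<Lambda> \<noteq> {}"
    and cl: "closed \<Lambda>" and cv: "convex \<Lambda>"
    and L: "L \<ge> 0"
    and finite_val: "\<And>g l. g \<in> G1 (X0 P) Pih \<Longrightarrow> l \<in> prob_simplex \<Longrightarrow>
        KL (X0 P) (mixture P l) (pi_gate Pih g) < \<infinity>"
    and lip: "\<And>g l l'. g \<in> G1 (X0 P) Pih \<Longrightarrow> l \<in> prob_simplex \<Longrightarrow> l' \<in> prob_simplex \<Longrightarrow>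
        \<bar>real_of_ereal (KL (X0 P) (mixture P l) (pi_gate Pih g))
         - real_of_ereal (KL (X0 P) (mixture P l') (pi_gate Pih g))\<bar> \<le> L * l1dist l l'"
  shows "0 \<le> minimax_value P Pih prob_simplex - minimax_value P Pih \<Lambda>
    \<and> minimax_value P Pih prob_simplex - minimax_value P Pih \<Lambda> \<le> ereal (L * hausdorff_l1 \<Lambda> prob_simplex)"
proof -
  define G where "G = G1 (X0 P) Pih"
  define K where "K g l = KL (X0 P) (mixture P l) (pi_gate Pih g)" for g l
  define h where "h = hausdorff_l1 \<Lambda> prob_simplex"
  have minimax_eq: "minimax_value P Pih S = (INF g\<in>G. SUP l\<in>S. K g l)" for S
    by (simp add: minimax_value_def G_def K_def)
  have finX: "finite (X0 P)" unfolding X0_def using fin by auto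
  have K_finite: "\<bar>K g l\<bar> \<noteq> \<infinity>" if "g \<in> G" "l \<in> prob_simplex" for g l
    using finite_val[OF that[unfolded G_def]] KL_mixture_pi_gate_ge_minus_one[OF finX that[unfolded G_def], of P]
    by (cases "K g l") (auto simp: K_def)
  have SUP_simplex_le: "(SUP l\<in>prob_simplex. K g l) \<le> (SUP l\<in>S. K g l) + ereal (L * c)"
    if "g \<in> G" "S \<subseteq> prob_simplex" "S \<noteq> {}"
      and "\<And>l. l \<in> prob_simplex \<Longrightarrow> (INF l'\<in>S. l1dist l l') \<le> c" for g S c
    using that K_finite L lip[of g] unfolding G_def K_def
    by (intro SUP_simplex_le_SUP_net_plus_Lipschitz) auto
  have upper: "minimax_value P Pih prob_simplex \<le> minimax_value P Pih \<Lambda> + ereal (L * h)"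
    unfolding minimax_eq h_def using sub ne
    by (intro INF_le_INF_plus_ereal SUP_simplex_le INF_l1dist_le_hausdorff_l1) auto
  have lower: "minimax_value P Pih \<Lambda> \<le> minimax_value P Pih prob_simplex"
    using sub by (rule minimax_value_mono)
  have "-1 \<le> minimax_value P Pih \<Lambda>"
    using finX sub ne by (rule minimax_value_ge_minus_one)
  moreover have "minimax_value P Pih prob_simplex < \<infinity>"
  proof -
    obtain l0 where l0: "l0 \<in> \<Lambda>" using ne by auto
    define g0 :: "'a \<Rightarrow> 'n \<Rightarrow> real" where "g0 = (\<lambda>x k. 1 / real CARD('n))"
    have g0: "g0 \<in> G" unfolding G_def g0_def using finX Pi_on by (rule uniform_gate_in_G1)
    \<comment> \<open>any single point of \<Delta> is a 2-net of \<Delta>\<close>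
    have "minimax_value P Pih prob_simplex \<le> (SUP l\<in>{l0}. K g0 l) + ereal (L * 2)"
      unfolding minimax_eq using g0 l0 sub
      by (intro INF_lower2[OF g0] SUP_simplex_le) (auto intro: l1dist_le_2)
    also have "\<dots> < \<infinity>" using finite_val[of g0 l0] g0 l0 sub by (auto simp: G_def K_def)
    finally show ?thesis .
  qed
  ultimately show ?thesis using upper lower unfolding h_def
    by (cases "minimax_value P Pih \<Lambda>"; cases "minimax_value P Pih prob_simplex") auto
qed

end
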